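(* Let $\mathbb{F}$ be a field, $n,d$ positive integers, and $P_n=\mathbb{F}[x_1,\dots,x_n]$. For $k\ge 3$ let $D_k$ be the set of monomials of degree $k$ in $x_1,\dots,x_{k-1}$ not divisible by $x_{k-1}^2$ (if $n<k-1$, $D_k$ is the set of all monomials of degree $k$ in $x_1,\dots,x_n$); let $K_n\subseteq P_n$ be the ideal generated by $x_1^3,\dots,x_n^3$ and $\bigcup_{k=3}^{n+1}D_k$, and let $K_{n,d}\subseteq P_n$ be the ideal generated by those of these generators of $K_n$ that have degree $\le d$. Let $\mu\in P_n$ be a monomial of degree $d-1$ which does not end in $x_{d-2}^2$, and assume $\mu\notin K_n$. Then there exists a monomial $M$ which is a multiple of $\mu$, has degree $2n-d+2$, and satisfies $M\notin K_{n,d}$.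
   Context: A monomial $m$ is said to end in $x_j^{e}$ if $m=x_1^{a_1}\cdots x_{j-1}^{a_{j-1}}x_j^{e}$, i.e. $m$ involves no variable $x_i$ with $i>j$ and the exponent of $x_j$ in $m$ is $e$. *)

theory Defs
  imports "HOL-Library.Poly_Mapping"
begin

text \<open>Multivariate polynomials over a field: exponent vectors (monomials) are
  finitely supported maps nat \<Rightarrow>0 nat (variable x_i has index i, i \<ge> 1);
  polynomials are finitely supported maps from monomials to coefficients,
  with the convolution ring structure of Poly_Mapping.\<close>

type_synonym mon = "nat \<Rightarrow>\<^sub>0 nat"
type_synonym 'a mpoly = "mon \<Rightarrow>\<^sub>0 'a"

definition mdeg :: "mon \<Rightarrow> nat" where
  "mdeg m = (\<Sum>i\<in>Poly_Mapping.keys m. Poly_Mapping.lookup m i)"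

definition mon_in :: "nat \<Rightarrow> mon \<Rightarrow> bool" where
  "mon_in n m \<longleftrightarrow> Poly_Mapping.keys m \<subseteq> {1..n}"

definition mpoly_of :: "mon \<Rightarrow> 'a::field mpoly" where
  "mpoly_of m = Poly_Mapping.single m 1"

definition Pn :: "nat \<Rightarrow> 'a::field mpoly set" where
  "Pn n = {p. \<forall>m\<in>Poly_Mapping.keys p. mon_in n m}"

definition ideal_gen :: "nat \<Rightarrow> 'a::field mpoly set \<Rightarrow> 'a mpoly set" where
  "ideal_gen n G = {p. \<exists>S c. finite S \<and> S \<subseteq> G \<and> (\<forall>g\<in>S. c g \<in> Pn n) \<and>
                          p = (\<Sum>g\<in>S. c g * g)}"

definition ends_in :: "mon \<Rightarrow> nat \<Rightarrow> nat \<Rightarrow> bool" where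
  "ends_in m j e \<longleftrightarrow> (\<forall>i>j. Poly_Mapping.lookup m i = 0) \<and> Poly_Mapping.lookup m j = e"

definition xpow :: "nat \<Rightarrow> nat \<Rightarrow> mon" where
  "xpow i e = Poly_Mapping.single i e"

text \<open>D_k for k \<ge> 3: monomials of degree k in x_1..x_{k-1} not divisible by x_{k-1}^2
  (the n < k-1 case never arises for 3 \<le> k \<le> n+1)\<close>
definition Dk :: "nat \<Rightarrow> mon set" where
  "Dk k = {m. mdeg m = k \<and> mon_in (k - 1) m \<and> Poly_Mapping.lookup m (k - 1) < 2}"

definition Kgens :: "nat \<Rightarrow> mon set" where
  "Kgens n = {xpow i 3 | i. 1 \<le> i \<and> i \<le> n} \<union> (\<Union>k\<in>{3..n+1}. Dk k)"

definition Kn :: "nat \<Rightarrow> 'a::field mpoly set" where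
  "Kn n = ideal_gen n (mpoly_of ` Kgens n)"

definition Knd :: "nat \<Rightarrow> nat \<Rightarrow> 'a::field mpoly set" where
  "Knd n d = ideal_gen n (mpoly_of ` {m \<in> Kgens n. mdeg m \<le> d})"

end

theory Submission
  imports Defs
begin

text \<open>A monomial lies in an ideal generated by monomials iff one of the generators divides it.
  So x^f avoids K_(n,d) as soon as all exponents are at most 2 (needed only if d \<ge> 3) and, for
  2 \<le> j < d, the monomial x_1^f_1 ... x_(j-1)^f_(j-1) x_j^min(f_j,1) has degree at most j; for
  \<mu> \<notin> K_n these conditions hold for every j \<le> n. Because \<mu> does not end in x_(d-2)^2, its part
  in x_1, ..., x_(d-2) has degree at most d - 2. Raise exponents in these variables, keeping the
  conditions, until that part has degree exactly d - 2, and give x_(d-1), ..., x_n exponent 2: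
  the result has degree 2n - d + 2, and the condition for j = d - 1 holds because the first
  d - 2 variables contribute exactly d - 2. For d \<le> 2 the ideal K_(n,d) is zero.\<close>

lemma mdeg_eq_sum:
  assumes "Poly_Mapping.keys m \<subseteq> A" and "finite A"
  shows "mdeg m = sum (Poly_Mapping.lookup m) A"
  unfolding mdeg_def using assms
  by (intro sum.mono_neutral_left) (auto simp: in_keys_iff)

lemma mdeg_add: "mdeg (a + b) = mdeg a + mdeg b"
  unfolding mdeg_def by (rule setsum_keys_plus_distrib) (simp_all add: lookup_add)

lemma mdeg_xpow: "mdeg (xpow i e) = e"
  by (simp add: mdeg_def xpow_def)

lemma keys_subset_iff_lookup_zero:
  "Poly_Mapping.keys m \<subseteq> A \<longleftrightarrow> (\<forall>i. i \<notin> A \<longrightarrow> Poly_Mapping.lookup m i = 0)"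
  by (auto simp: in_keys_iff)

lemma lookup_Abs_poly_mapping_supported:
  assumes "finite A" and "\<And>i. i \<notin> A \<Longrightarrow> F i = 0"
  shows "Poly_Mapping.lookup (Abs_poly_mapping F) = F"
  using assms by (intro lookup_Abs_poly_mapping) (metis (mono_tags) finite_subset mem_Collect_eq subsetI)

abbreviation mon_dvd :: "mon \<Rightarrow> mon \<Rightarrow> bool" where
  "mon_dvd g M \<equiv> \<forall>i. Poly_Mapping.lookup g i \<le> Poly_Mapping.lookup M i"

lemma add_diff_if_mon_dvd:
  assumes "mon_dvd g M"
  shows "g + (M - g) = M"
  using assms by (intro poly_mapping_eqI) (simp add: lookup_add lookup_minus)

lemma sum_atLeastAtMost_last:
  fixes f :: "nat \<Rightarrow> 'a::comm_monoid_add"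
  assumes "m \<le> j"
  shows "sum f {m..j} = sum f {m..<j} + f j"
  using assms by (simp add: sum.atLeastLessThan_Suc flip: atLeastLessThanSuc_atLeastAtMost)

lemma sum_atLeastAtMost_split:
  fixes f :: "nat \<Rightarrow> 'a::comm_monoid_add"
  assumes "m \<le> n"
  shows "sum f {1..n} = sum f {1..m} + sum f {m<..n}"
proof -
  have "{1..n} = {1..m} \<union> {m<..n}"
    using assms by auto
  then show ?thesis
    by (simp add: sum.union_disjoint ivl_disj_int)
qed

lemma mpoly_of_in_ideal_gen_iff:
  assumes "mon_in n M"
  shows "(mpoly_of M :: 'a::field mpoly) \<in> ideal_gen n (mpoly_of ` G) \<longleftrightarrow>
         (\<exists>g\<in>G. mon_dvd g M)"
proof
  assume "(mpoly_of M :: 'a mpoly) \<in> ideal_gen n (mpoly_of ` G)"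
  then obtain S c where S: "S \<subseteq> mpoly_of ` G" and M: "(mpoly_of M :: 'a mpoly) = (\<Sum>p\<in>S. c p * p)"
    unfolding ideal_gen_def by auto
  have "M \<in> Poly_Mapping.keys (mpoly_of M :: 'a mpoly)"
    by (simp add: mpoly_of_def)
  then have "M \<in> Poly_Mapping.keys (\<Sum>p\<in>S. c p * p)"
    by (simp only: M)
  then obtain p where "p \<in> S" and M_in: "M \<in> Poly_Mapping.keys (c p * p)"
    using keys_sum[of "\<lambda>p. c p * p" S] by blast
  moreover obtain g where "g \<in> G" and "p = mpoly_of g"
    using S \<open>p \<in> S\<close> by blast
  ultimately obtain a where "M = a + g"
    using keys_mult[of "c p" p] by (auto simp: mpoly_of_def)
  then show "\<exists>g\<in>G. mon_dvd g M"
    using \<open>g \<in> G\<close> by (intro bexI[of _ g]) (auto simp: lookup_add)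
next
  assume "\<exists>g\<in>G. mon_dvd g M"
  then obtain g where "g \<in> G" and g: "mon_dvd g M"
    by blast
  have "(mpoly_of M :: 'a mpoly) = mpoly_of (M - g) * mpoly_of g"
    using add_diff_if_mon_dvd[OF g] by (simp add: mpoly_of_def mult_single add.commute)
  moreover have "(mpoly_of (M - g) :: 'a mpoly) \<in> Pn n"
    using assms by (auto simp: Pn_def mpoly_of_def mon_in_def in_keys_iff lookup_minus)
  ultimately show "(mpoly_of M :: 'a mpoly) \<in> ideal_gen n (mpoly_of ` G)"
    unfolding ideal_gen_def using \<open>g \<in> G\<close>
    by (intro CollectI exI[of _ "{mpoly_of g}"] exI[of _ "\<lambda>_. mpoly_of (M - g)"]) auto
qed

text \<open>The exponent vector f admits no divisor from D_(j+1): a divisor of degree j + 1 in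
  x_1, ..., x_j may use x_j at most once.\<close>

definition Dk_free :: "(nat \<Rightarrow> nat) \<Rightarrow> nat \<Rightarrow> bool" where
  "Dk_free f j \<longleftrightarrow> sum f {1..<j} + min (f j) 1 \<le> j"

lemma Dk_free_cong:
  assumes "\<And>i. 1 \<le> i \<Longrightarrow> i \<le> j \<Longrightarrow> f i = g i" and "1 \<le> j"
  shows "Dk_free f j \<longleftrightarrow> Dk_free g j"
  using assms unfolding Dk_free_def by (metis (no_types, lifting) atLeastLessThan_iff
      less_imp_le_nat order_refl sum.cong)

lemma exists_le_sum_eq:
  fixes f :: "'a \<Rightarrow> nat"
  assumes "finite A" and "k \<le> sum f A"
  shows "\<exists>g. (\<forall>i. g i \<le> f i) \<and> (\<forall>i. i \<notin> A \<longrightarrow> g i = 0) \<and> sum g A = k"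
  using assms
proof (induction A arbitrary: k rule: finite_induct)
  case empty
  then show ?case by (intro exI[of _ "\<lambda>_. 0"]) auto
next
  case (insert a A)
  show ?case
  proof (cases "k \<le> sum f A")
    case True
    with insert.IH obtain g where "\<forall>i. g i \<le> f i" "\<forall>i. i \<notin> A \<longrightarrow> g i = 0" "sum g A = k"
      by blast
    with insert.hyps show ?thesis by (intro exI[of _ g]) auto
  next
    case False
    define g where "g i = (if i \<in> A then f i else if i = a then k - sum f A else 0)" for i
    have "sum g A = sum f A"
      unfolding g_def by (rule sum.cong) auto
    with insert False show ?thesis
      by (intro exI[of _ g]) (auto simp: g_def)
  qed
qed

lemma ex_Dk_Suc_dvd_iff:
  assumes "1 \<le> j"
  shows "(\<exists>g\<in>Dk (Suc j). mon_dvd g M) \<longleftrightarrow>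
         \<not> Dk_free (Poly_Mapping.lookup M) j"
proof
  assume "\<exists>g\<in>Dk (Suc j). mon_dvd g M"
  then obtain g where g: "g \<in> Dk (Suc j)" and le: "mon_dvd g M"
    by blast
  have "Suc j = sum (Poly_Mapping.lookup g) {1..j}"
    using g mdeg_eq_sum[of g "{1..j}"] by (simp add: Dk_def mon_in_def)
  also have "\<dots> = sum (Poly_Mapping.lookup g) {1..<j} + Poly_Mapping.lookup g j"
    using assms by (rule sum_atLeastAtMost_last)
  also have "\<dots> \<le> sum (Poly_Mapping.lookup M) {1..<j} + min (Poly_Mapping.lookup M j) 1"
    using g le by (intro add_mono sum_mono) (auto simp: Dk_def)
  finally show "\<not> Dk_free (Poly_Mapping.lookup M) j"
    unfolding Dk_free_def by simp
next
  define f where "f = Poly_Mapping.lookup M"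
  define h where "h i = (if i < j then f i else if i = j then min (f j) 1 else 0)" for i
  assume "\<not> Dk_free (Poly_Mapping.lookup M) j"
  moreover have "sum h {1..j} = sum f {1..<j} + min (f j) 1"
    using assms by (simp add: sum_atLeastAtMost_last h_def)
  ultimately have "Suc j \<le> sum h {1..j}"
    by (simp add: Dk_free_def f_def)
  then obtain g where gh: "\<forall>i. g i \<le> h i" and g0: "\<forall>i. i \<notin> {1..j} \<longrightarrow> g i = 0"
    and gsum: "sum g {1..j} = Suc j"
    using exists_le_sum_eq[of "{1..j}" "Suc j" h] by auto
  define G where "G = Abs_poly_mapping g"
  have lookup_G: "Poly_Mapping.lookup G = g"
    unfolding G_def using g0 by (intro lookup_Abs_poly_mapping_supported[of "{1..j}"]) auto
  have keys_G: "Poly_Mapping.keys G \<subseteq> {1..j}"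
    using g0 by (simp add: keys_subset_iff_lookup_zero lookup_G)
  have "G \<in> Dk (Suc j)"
    using mdeg_eq_sum[OF keys_G] gsum keys_G spec[OF gh, of j]
    by (auto simp: Dk_def mon_in_def lookup_G h_def)
  moreover have "mon_dvd G M"
    using gh by (auto simp: lookup_G h_def f_def intro: order_trans)
  ultimately show "\<exists>g\<in>Dk (Suc j). mon_dvd g M"
    by blast
qed

lemma bounded_Dk_free_if_notin_Kn:
  assumes "mon_in n \<mu>" and "(mpoly_of \<mu> :: 'a::field mpoly) \<notin> Kn n"
  shows "\<forall>i. Poly_Mapping.lookup \<mu> i \<le> 2" and "\<forall>j\<in>{1..n}. Dk_free (Poly_Mapping.lookup \<mu>) j"
proof -
  have no_divisor: "\<not> mon_dvd g \<mu>" if "g \<in> Kgens n" for g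
    using assms that by (auto simp: Kn_def mpoly_of_in_ideal_gen_iff)
  show "\<forall>i. Poly_Mapping.lookup \<mu> i \<le> 2"
  proof (rule ccontr)
    assume "\<not> ?thesis"
    then obtain i where i: "2 < Poly_Mapping.lookup \<mu> i"
      by (auto simp: not_le)
    then have "i \<in> Poly_Mapping.keys \<mu>"
      by (simp add: in_keys_iff)
    with assms(1) have "1 \<le> i" "i \<le> n"
      unfolding mon_in_def by auto
    then have "xpow i 3 \<in> Kgens n"
      unfolding Kgens_def by blast
    moreover have "mon_dvd (xpow i 3) \<mu>"
      using i by (simp add: xpow_def lookup_single when_def)
    ultimately show False
      using no_divisor by blast
  qed
  show "\<forall>j\<in>{1..n}. Dk_free (Poly_Mapping.lookup \<mu>) j"
  proof
    fix j assume j: "j \<in> {1..n}"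
    show "Dk_free (Poly_Mapping.lookup \<mu>) j"
    proof (cases "j = 1")
      case False
      with j have "Suc j \<in> {3..n+1}" and "1 \<le> j"
        by auto
      then have "Dk (Suc j) \<subseteq> Kgens n"
        unfolding Kgens_def by blast
      with no_divisor ex_Dk_Suc_dvd_iff[OF \<open>1 \<le> j\<close>, of \<mu>] show ?thesis
        by blast
    qed (simp add: Dk_free_def)
  qed
qed

lemma mpoly_of_notin_KndI:
  assumes "mon_in n M" and "3 \<le> d \<Longrightarrow> \<forall>i. Poly_Mapping.lookup M i \<le> 2"
    and "\<And>j. 2 \<le> j \<Longrightarrow> j < d \<Longrightarrow> Dk_free (Poly_Mapping.lookup M) j"
  shows "(mpoly_of M :: 'a::field mpoly) \<notin> Knd n d"
proof
  assume "(mpoly_of M :: 'a mpoly) \<in> Knd n d"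
  then obtain g where g: "g \<in> Kgens n" "mdeg g \<le> d"
    and le: "mon_dvd g M"
    using assms(1) by (auto simp: Knd_def mpoly_of_in_ideal_gen_iff)
  from g(1) consider (cube) i where "g = xpow i 3" | (D) k where "k \<in> {3..n+1}" "g \<in> Dk k"
    unfolding Kgens_def by blast
  then show False
  proof cases
    case cube
    then have "3 \<le> d"
      using g(2) by (simp add: mdeg_xpow)
    with assms(2) have "Poly_Mapping.lookup M i \<le> 2"
      by blast
    then show False
      using spec[OF le, of i] by (simp add: cube xpow_def)
  next
    case D
    then have "g \<in> Dk (Suc (k - 1))" "1 \<le> k - 1"
      by auto
    with le have "\<not> Dk_free (Poly_Mapping.lookup M) (k - 1)"
      using ex_Dk_Suc_dvd_iff by blast
    moreover have "2 \<le> k - 1" "k - 1 < d"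
      using D g(2) by (auto simp: Dk_def)
    ultimately show False
      using assms(3) by blast
  qed
qed

lemma sum_le_if_Dk_free:
  assumes "Dk_free f j" and "f j \<le> 2" and "1 \<le> j"
  shows "sum f {1..j} \<le> j \<or> (sum f {1..j} = Suc j \<and> f j = 2)"
  using assms unfolding Dk_free_def sum_atLeastAtMost_last[OF assms(3)]
  by (auto simp: min_def split: if_splits)

lemma sum_le_if_not_ends_in_2:
  assumes "mon_in n \<mu>" and "1 \<le> j" and "j \<le> n" and "mdeg \<mu> \<le> Suc j"
    and "Poly_Mapping.lookup \<mu> j \<le> 2" and "Dk_free (Poly_Mapping.lookup \<mu>) j"
    and "\<not> ends_in \<mu> j 2"
  shows "sum (Poly_Mapping.lookup \<mu>) {1..j} \<le> j"
proof (rule ccontr)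
  let ?f = "Poly_Mapping.lookup \<mu>"
  assume "\<not> ?thesis"
  with sum_le_if_Dk_free assms(2,5,6) have sum_j: "sum ?f {1..j} = Suc j" and "?f j = 2"
    by blast+
  have "mdeg \<mu> = sum ?f {1..j} + sum ?f {j<..n}"
    using assms(1,3) sum_atLeastAtMost_split[OF assms(3)] by (simp add: mdeg_eq_sum mon_in_def)
  then have "\<forall>i\<in>{j<..n}. ?f i = 0"
    using assms(4) sum_j by simp
  moreover have "\<forall>i>n. ?f i = 0"
    using assms(1) by (auto simp: mon_in_def in_keys_iff)
  ultimately have "ends_in \<mu> j 2"
    using \<open>?f j = 2\<close> by (auto simp: ends_in_def not_le)
  with assms(7) show False ..
qed

lemma degree_bounds_if_not_ends_in_2:
  assumes "mon_in n \<mu>" and "0 < n" and "3 \<le> d" and "mdeg \<mu> = d - 1"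
    and "\<not> ends_in \<mu> (d - 2) 2" and "\<forall>i. Poly_Mapping.lookup \<mu> i \<le> 2"
    and "\<forall>j\<in>{1..n}. Dk_free (Poly_Mapping.lookup \<mu>) j"
  shows "d - 2 \<le> n" and "sum (Poly_Mapping.lookup \<mu>) {1..d - 2} \<le> d - 2"
proof -
  have "sum (Poly_Mapping.lookup \<mu>) {1..n} = d - 1"
    using assms(1,4) by (simp add: mdeg_eq_sum mon_in_def)
  then show "d - 2 \<le> n"
    using sum_le_if_Dk_free[of "Poly_Mapping.lookup \<mu>" n] assms(2,6,7) by force
  then show "sum (Poly_Mapping.lookup \<mu>) {1..d - 2} \<le> d - 2"
    using assms by (intro sum_le_if_not_ends_in_2[of n]) auto
qed

lemma Dk_free_fun_upd_Suc:
  assumes "\<forall>j\<in>{1..m}. Dk_free N j" and "sum N {1..m} \<le> m"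
  shows "\<forall>j\<in>{1..Suc m}. Dk_free (N(Suc m := e)) j"
proof -
  have "\<forall>j\<in>{1..m}. Dk_free (N(Suc m := e)) j"
    using assms(1) Dk_free_cong[of _ "N(Suc m := e)" N] by auto
  moreover have "Dk_free (N(Suc m := e)) (Suc m)"
    using assms(2) by (simp add: Dk_free_def atLeastLessThanSuc_atLeastAtMost)
  ultimately show ?thesis
    by (auto simp: le_Suc_eq)
qed

lemma Dk_free_extend:
  assumes "\<forall>i. \<nu> i \<le> 2" and "\<forall>j\<in>{1..m}. Dk_free \<nu> j" and "sum \<nu> {1..m} \<le> t" and "t \<le> m"
  shows "\<exists>N. (\<forall>i. \<nu> i \<le> N i) \<and> (\<forall>i. N i \<le> 2) \<and> (\<forall>j\<in>{1..m}. Dk_free N j) \<and>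
             sum N {1..m} = t"
  using assms(2-4)
proof (induction m arbitrary: t)
  case 0
  with assms(1) show ?case
    by (intro exI[of _ \<nu>]) auto
next
  case (Suc m)
  define S where "S = sum \<nu> {1..m}"
  have "Dk_free \<nu> (Suc m)"
    using Suc.prems(1) by auto
  then have free: "S + min (\<nu> (Suc m)) 1 \<le> Suc m"
    by (simp add: Dk_free_def S_def atLeastLessThanSuc_atLeastAtMost)
  have total: "S + \<nu> (Suc m) \<le> t"
    using Suc.prems(2) by (simp add: S_def)
  show ?case
  proof (cases "S = Suc m")
    case True
    with free total Suc.prems(3) have "\<nu> (Suc m) = 0" "t = Suc m"
      by auto
    with Suc.prems(1) True assms(1) show ?thesis
      by (intro exI[of _ \<nu>]) (auto simp: S_def)
  next
    case False
    define t0 where "t0 = max S (t - 2)"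
    have "S \<le> m"
      using free False by auto
    with Suc.prems(3) have "t0 \<le> m"
      by (simp add: t0_def)
    moreover have "\<forall>j\<in>{1..m}. Dk_free \<nu> j"
      using Suc.prems(1) by auto
    ultimately obtain N0 where N0: "\<forall>i. \<nu> i \<le> N0 i" "\<forall>i. N0 i \<le> 2"
      "\<forall>j\<in>{1..m}. Dk_free N0 j" "sum N0 {1..m} = t0"
      using Suc.IH[of t0] by (auto simp: S_def t0_def)
    define N where "N = N0(Suc m := t - t0)"
    have sum_N: "sum N {1..m} = t0"
      using N0(4) by (simp add: N_def)
    have bounds: "\<nu> (Suc m) \<le> t - t0" "t - t0 \<le> 2" "t0 \<le> t"
      using total spec[OF assms(1), of "Suc m"] by (auto simp: t0_def max_def)
    have "\<forall>j\<in>{1..Suc m}. Dk_free N j"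
      unfolding N_def using N0(3,4) \<open>t0 \<le> m\<close> by (intro Dk_free_fun_upd_Suc) auto
    moreover have "\<forall>i. \<nu> i \<le> N i" "\<forall>i. N i \<le> 2"
      using N0(1,2) bounds by (auto simp: N_def)
    moreover have "sum N {1..Suc m} = t"
      using sum_N bounds(3) by (simp add: N_def)
    ultimately show ?thesis
      by blast
  qed
qed

lemma exists_Dk_free_multiple:
  assumes "mon_in n \<mu>" and "\<forall>i. Poly_Mapping.lookup \<mu> i \<le> 2"
    and "\<forall>j\<in>{1..m}. Dk_free (Poly_Mapping.lookup \<mu>) j"
    and "sum (Poly_Mapping.lookup \<mu>) {1..m} \<le> m" and "m \<le> n"
  shows "\<exists>M. mon_in n M \<and> (\<exists>m'. M = \<mu> + m') \<and> mdeg M = 2 * n - m \<and>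
             (\<forall>i. Poly_Mapping.lookup M i \<le> 2) \<and>
             (\<forall>j\<in>{1..Suc m}. Dk_free (Poly_Mapping.lookup M) j)"
proof -
  let ?f = "Poly_Mapping.lookup \<mu>"
  obtain N where N: "\<forall>i. ?f i \<le> N i" "\<forall>i. N i \<le> 2" "\<forall>j\<in>{1..m}. Dk_free N j"
    "sum N {1..m} = m"
    using Dk_free_extend[OF assms(2-4) order_refl] by blast
  define F where "F i = (if i \<in> {1..m} then N i else if i \<in> {m<..n} then 2 else 0)" for i
  define M where "M = Abs_poly_mapping F"
  have lookup_M: "Poly_Mapping.lookup M = F"
    unfolding M_def using assms(5) by (intro lookup_Abs_poly_mapping_supported[of "{1..n}"]) (auto simp: F_def)
  have keys_M: "Poly_Mapping.keys M \<subseteq> {1..n}"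
    using assms(5) by (auto simp: keys_subset_iff_lookup_zero lookup_M F_def)
  have "?f i \<le> F i" for i
    using N(1) assms(1,2) by (auto simp: F_def mon_in_def in_keys_iff)
  then have "M = \<mu> + (M - \<mu>)"
    by (simp add: add_diff_if_mon_dvd lookup_M)
  moreover have "mdeg M = 2 * n - m"
  proof -
    have "mdeg M = sum F {1..m} + sum F {m<..n}"
      using mdeg_eq_sum[OF keys_M] sum_atLeastAtMost_split[OF assms(5)] by (simp add: lookup_M)
    also have "\<dots> = m + 2 * (n - m)"
      using N(4) by (simp add: F_def)
    finally show ?thesis
      using assms(5) by simp
  qed
  moreover have "\<forall>i. F i \<le> 2"
    using N(2) by (simp add: F_def)
  moreover have "\<forall>j\<in>{1..m}. Dk_free F j"
    using N(3) Dk_free_cong[of _ F N] by (auto simp: F_def)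
  moreover have "Dk_free F (Suc m)"
    using N(4) by (simp add: Dk_free_def F_def atLeastLessThanSuc_atLeastAtMost)
  ultimately show ?thesis
    using keys_M unfolding mon_in_def lookup_M[symmetric]
    by (intro exI[of _ M]) (auto simp: le_Suc_eq)
qed

lemma exists_multiple_of_mdeg:
  assumes "mon_in n \<mu>" and "0 < n" and "mdeg \<mu> \<le> k"
  shows "\<exists>M. mon_in n M \<and> (\<exists>m'. M = \<mu> + m') \<and> mdeg M = k"
proof (intro exI conjI)
  let ?M = "\<mu> + xpow 1 (k - mdeg \<mu>)"
  have "Poly_Mapping.keys (xpow 1 (k - mdeg \<mu>)) \<subseteq> {1..n}"
    using assms(2) by (simp add: xpow_def)
  then show "mon_in n ?M"
    using assms(1) keys_add[of \<mu> "xpow 1 (k - mdeg \<mu>)"] unfolding mon_in_def by blast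
  show "mdeg ?M = k"
    using assms(3) by (simp add: mdeg_add mdeg_xpow)
qed (rule refl)

theorem mainTheorem12:
  fixes n d :: nat and \<mu> :: mon
  assumes "n > 0" and "d > 0"
    and "mon_in n \<mu>" and "mdeg \<mu> = d - 1"
    and "\<not> ends_in \<mu> (d - 2) 2"
    and "(mpoly_of \<mu> :: 'a::field mpoly) \<notin> Kn n"
  shows "\<exists>M. mon_in n M \<and> (\<exists>m'. M = \<mu> + m') \<and>
             int (mdeg M) = 2 * int n - int d + 2 \<and>
             (mpoly_of M :: 'a mpoly) \<notin> Knd n d"
proof -
  note bounded = bounded_Dk_free_if_notin_Kn[OF assms(3,6)]
  show ?thesis
  proof (cases "d \<le> 2")
    case True
    with assms(1,4) have "mdeg \<mu> \<le> 2 * n + 2 - d"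
      by simp
    then obtain M where M: "mon_in n M" "\<exists>m'. M = \<mu> + m'" "mdeg M = 2 * n + 2 - d"
      using exists_multiple_of_mdeg[OF assms(3,1)] by blast
    moreover have "(mpoly_of M :: 'a mpoly) \<notin> Knd n d"
      using M(1) True by (intro mpoly_of_notin_KndI) auto
    ultimately show ?thesis
      using True by (intro exI[of _ M]) auto
  next
    case False
    then have "d - 2 \<le> n" and sum_bound: "sum (Poly_Mapping.lookup \<mu>) {1..d - 2} \<le> d - 2"
      using degree_bounds_if_not_ends_in_2[OF assms(3,1) _ assms(4,5) bounded] by auto
    moreover from this have free: "\<forall>j\<in>{1..d - 2}. Dk_free (Poly_Mapping.lookup \<mu>) j"
      using bounded(2) by auto
    ultimately obtain M where M: "mon_in n M" "\<exists>m'. M = \<mu> + m'" "mdeg M = 2 * n - (d - 2)"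
      "\<forall>i. Poly_Mapping.lookup M i \<le> 2" "\<forall>j\<in>{1..Suc (d - 2)}. Dk_free (Poly_Mapping.lookup M) j"
      using exists_Dk_free_multiple[OF assms(3) bounded(1) free sum_bound] by blast
    moreover have "(mpoly_of M :: 'a mpoly) \<notin> Knd n d"
      using M(1,4,5) by (intro mpoly_of_notin_KndI) auto
    ultimately show ?thesis
      using False \<open>d - 2 \<le> n\<close> by (intro exI[of _ M]) auto
  qed
qed

end
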